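(* The set of all $P^0\in L\cap\Delta^{n-1}_+$ satisfying $\bigl(P^0+\mathbf{Q}(P^0,P^* )\bigr)\cap L=\{P^0\}$ equals $$\bigcup\Bigl\{L\cap\mathcal{C}_\sigma\cap\Delta^{n-1}_+\ :\ \sigma \text{ a surjection } \{1,\dots,n\}\to\{1,\dots,k'+1\},\ 0\le k'\le n-1,\ L\cap\mathcal{C}_\sigma\neq\emptyset,\ L^0\cap Q_\sigma=\{0\}\Bigr\}.$$ Moreover, $\mathbf{Q}(P,P^* )=Q_\sigma$ for every $P\in\mathcal{C}_\sigma$.
   Context: Fix $n\ge 2$ and $P^*=(p^*_i)$ with $p^*_i>0$, $\sum_i p^*_i=1$; $\Delta^{n-1}_+=\{P\in\mathbb{R}^n: p_i>0,\ \sum_i p_i=1\}$. For $i\neq j$, $\gamma^{ji}=-\gamma^{ij}$ is the vector with $\gamma^{ji}_j=-1$, $\gamma^{ji}_i=1$, other coordinates $0$; ${\rm cone}$ denotes non-negative linear combinations; ${\rm sign}$ is three-valued; $\mathbf{Q}(P,P^* )={\rm cone}\{\gamma^{ji}\,{\rm sign}(\tfrac{p_j}{p^*_j}-\tfrac{p_i}{p^*_i}) : 1\le j<i\le n\}$. For a surjection $\sigma:\{1,\dots,n\}\to\{1,\dots,k'+1\}$: $\mathcal{C}_\sigma=\{P\in\Delta^{n-1}:\ \frac{p_i}{p^*_i}=\frac{p_j}{p^*_j}$ if $\sigma(i)=\sigma(j)$, and $\frac{p_i}{p^*_i}>\frac{p_j}{p^*_j}$ if $\sigma(j)=\sigma(i)+1\}$,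 and $Q_\sigma={\rm cone}\{\gamma^{ij}:\ \sigma(j)=\sigma(i)+1\}$. The condition manifold is $L=\{P:\ \sum_j m_{rj}p_j=M_r,\ r=0,\dots,k\}$ with $m_{0j}=1$, $M_0=1$, $L\cap\Delta^{n-1}_+\ne\emptyset$, and $L^0=\{x\in\mathbb{R}^n:\ \sum_j m_{rj}x_j=0,\ r=0,\dots,k\}$. *)

theory Defs
  imports Complex_Main
begin

text \<open>Vectors of R^n are represented as functions nat => real indexed by {1..n}
  and vanishing outside {1..n}.\<close>

definition vecn :: "nat \<Rightarrow> (nat \<Rightarrow> real) set" where
  "vecn n = {x. \<forall>t. t \<notin> {1..n} \<longrightarrow> x t = 0}"

text \<open>gamma j i is the vector with coordinate j equal to -1, coordinate i equal to 1
  (for i ~= j), other coordinates 0; i.e. gamma j i = gamma^{ji}.\<close>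
definition gamma :: "nat \<Rightarrow> nat \<Rightarrow> nat \<Rightarrow> real" where
  "gamma j i = (\<lambda>t. if t = i then 1 else if t = j then -1 else 0)"

definition fcone :: "(nat \<Rightarrow> real) set \<Rightarrow> (nat \<Rightarrow> real) set" where
  "fcone S = {x. \<exists>c. (\<forall>s\<in>S. c s \<ge> 0) \<and> (\<forall>t. x t = (\<Sum>s\<in>S. c s * s t))}"

definition simplex :: "nat \<Rightarrow> (nat \<Rightarrow> real) set" where
  "simplex n = {P \<in> vecn n. (\<forall>i\<in>{1..n}. P i \<ge> 0) \<and> (\<Sum>i=1..n. P i) = 1}"

definition simplex_pos :: "nat \<Rightarrow> (nat \<Rightarrow> real) set" where
  "simplex_pos n = {P \<in> vecn n. (\<forall>i\<in>{1..n}. P i > 0) \<and> (\<Sum>i=1..n. P i) = 1}"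

definition Qcone :: "nat \<Rightarrow> (nat \<Rightarrow> real) \<Rightarrow> (nat \<Rightarrow> real) \<Rightarrow> (nat \<Rightarrow> real) set" where
  "Qcone n P Ps = fcone {(\<lambda>t. sgn (P j / Ps j - P i / Ps i) * gamma j i t) | j i.
                           1 \<le> j \<and> j < i \<and> i \<le> n}"

definition Cset :: "nat \<Rightarrow> (nat \<Rightarrow> real) \<Rightarrow> (nat \<Rightarrow> nat) \<Rightarrow> (nat \<Rightarrow> real) set" where
  "Cset n Ps \<sigma> = {P \<in> simplex n.
      (\<forall>i\<in>{1..n}. \<forall>j\<in>{1..n}. \<sigma> i = \<sigma> j \<longrightarrow> P i / Ps i = P j / Ps j) \<and>
      (\<forall>i\<in>{1..n}. \<forall>j\<in>{1..n}. \<sigma> j = \<sigma> i + 1 \<longrightarrow> P i / Ps i > P j / Ps j)}"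

definition Qsigma :: "nat \<Rightarrow> (nat \<Rightarrow> nat) \<Rightarrow> (nat \<Rightarrow> real) set" where
  "Qsigma n \<sigma> = fcone {gamma i j | i j. i \<in> {1..n} \<and> j \<in> {1..n} \<and> \<sigma> j = \<sigma> i + 1}"

definition Lman :: "nat \<Rightarrow> nat \<Rightarrow> (nat \<Rightarrow> nat \<Rightarrow> real) \<Rightarrow> (nat \<Rightarrow> real) \<Rightarrow> (nat \<Rightarrow> real) set" where
  "Lman n k m M = {P \<in> vecn n. \<forall>r\<le>k. (\<Sum>j=1..n. m r j * P j) = M r}"

definition L0 :: "nat \<Rightarrow> nat \<Rightarrow> (nat \<Rightarrow> nat \<Rightarrow> real) \<Rightarrow> (nat \<Rightarrow> real) set" where
  "L0 n k m = {x \<in> vecn n. \<forall>r\<le>k. (\<Sum>j=1..n. m r j * x j) = 0}"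

definition translate :: "(nat \<Rightarrow> real) \<Rightarrow> (nat \<Rightarrow> real) set \<Rightarrow> (nat \<Rightarrow> real) set" where
  "translate P S = {(\<lambda>t. P t + q t) | q. q \<in> S}"

end

theory Submission
  imports Defs
begin

text \<open>On \<open>\<C>\<^sub>\<sigma>\<close> the ratios \<open>p\<^sub>i/p\<^sup>*\<^sub>i\<close> are constant on the level sets of \<open>\<sigma>\<close> and strictly decrease from
  one level to the next, so all signs occurring in \<open>\<Q>(P,P\<^sup>*)\<close> are determined by \<open>\<sigma>\<close>; the
  generators \<open>\<gamma>\<^sup>i\<^sup>j\<close> with \<open>\<sigma> i < \<sigma> j\<close> are sums of generators between consecutive levels, hence
  \<open>\<Q>(P,P\<^sup>*) = Q\<^sub>\<sigma>\<close>. Every point of the simplex lies in some \<open>\<C>\<^sub>\<sigma>\<close>: rank the distinct ratios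
  in decreasing order. Finally, since \<open>L = P\<^sup>0 + L\<^sup>0\<close> for \<open>P\<^sup>0 \<in> L\<close>, the condition
  \<open>(P\<^sup>0 + Q) \<inter> L = {P\<^sup>0}\<close> for a cone \<open>Q\<close> is equivalent to \<open>L\<^sup>0 \<inter> Q = {0}\<close>.\<close>

section \<open>Finitely generated cones\<close>

lemma fcone_zero: "(\<lambda>_. 0) \<in> fcone S"
  unfolding fcone_def by (intro CollectI exI[of _ "\<lambda>_. 0"]) simp

lemma fcone_add:
  assumes "x \<in> fcone S" "y \<in> fcone S"
  shows "(\<lambda>t. x t + y t) \<in> fcone S"
proof -
  obtain c d where "\<forall>s\<in>S. c s \<ge> 0" "\<forall>t. x t = (\<Sum>s\<in>S. c s * s t)"
    and "\<forall>s\<in>S. d s \<ge> 0" "\<forall>t. y t = (\<Sum>s\<in>S. d s * s t)"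
    using assms unfolding fcone_def by blast
  then show ?thesis unfolding fcone_def
    by (intro CollectI exI[of _ "\<lambda>s. c s + d s"]) (simp add: distrib_right sum.distrib)
qed

lemma fcone_scale:
  assumes "a \<ge> 0" "x \<in> fcone S"
  shows "(\<lambda>t. a * x t) \<in> fcone S"
proof -
  obtain c where "\<forall>s\<in>S. c s \<ge> 0" "\<forall>t. x t = (\<Sum>s\<in>S. c s * s t)"
    using assms unfolding fcone_def by blast
  then show ?thesis unfolding fcone_def using assms(1)
    by (intro CollectI exI[of _ "\<lambda>s. a * c s"]) (simp add: sum_distrib_left mult.assoc)
qed

lemma fcone_generator:
  assumes "finite S" "s \<in> S"
  shows "s \<in> fcone S"
proof -
  have "(\<Sum>u\<in>S. (if u = s then 1 else 0) * u t) = (\<Sum>u\<in>S. if u = s then s t else 0)" for t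
    by (rule sum.cong) auto
  then have "s t = (\<Sum>u\<in>S. (if u = s then 1 else 0) * u t)" for t
    using assms by simp
  then show ?thesis unfolding fcone_def
    by (intro CollectI exI[of _ "\<lambda>u. if u = s then 1 else 0"]) simp
qed

lemma fcone_least:
  assumes "finite T" "T \<subseteq> fcone S"
  shows "fcone T \<subseteq> fcone S"
proof
  fix x assume "x \<in> fcone T"
  then obtain c where c: "\<forall>s\<in>T. c s \<ge> 0" "\<forall>t. x t = (\<Sum>s\<in>T. c s * s t)"
    unfolding fcone_def by blast
  have "F \<subseteq> T \<Longrightarrow> (\<lambda>t. \<Sum>s\<in>F. c s * s t) \<in> fcone S" for F
    using finite_subset[OF _ assms(1)]
  proof (induction F rule: infinite_finite_induct)
    case (insert s F)
    then have "(\<lambda>t. c s * s t + (\<Sum>s\<in>F. c s * s t)) \<in> fcone S"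
      using assms(2) c(1) by (intro fcone_add fcone_scale) auto
    then show ?case using insert by simp
  qed (auto simp: fcone_zero)
  moreover have "x = (\<lambda>t. \<Sum>s\<in>T. c s * s t)" using c(2) by auto
  ultimately show "x \<in> fcone S" by simp
qed

lemma fcone_mono:
  assumes "finite T" "S \<subseteq> T"
  shows "fcone S \<subseteq> fcone T"
  using assms by (meson fcone_generator fcone_least finite_subset subset_iff)

lemma finite_setcompr_pairs:
  assumes "finite A" "finite B" "\<And>a b. Q a b \<Longrightarrow> a \<in> A \<and> b \<in> B"
  shows "finite {f a b | a b. Q a b}"
proof (rule finite_subset)
  show "{f a b | a b. Q a b} \<subseteq> (\<lambda>(a, b). f a b) ` (A \<times> B)"
    using assms(3) by fastforce
qed (use assms(1,2) in simp)

lemma finite_Qcone_generators: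
  "finite {(\<lambda>t. sgn (P j / Ps j - P i / Ps i) * gamma j i t) | j i. 1 \<le> j \<and> j < i \<and> i \<le> n}"
  by (rule finite_setcompr_pairs[of "{1..n}" "{1..n}"]) auto

lemma finite_Qsigma_generators:
  "finite {gamma i j | i j. i \<in> {1..n} \<and> j \<in> {1..n} \<and> \<sigma> j = \<sigma> i + 1}"
  by (rule finite_setcompr_pairs[of "{1..n}" "{1..n}"]) auto

section \<open>The cone of sign directions on a cell\<close>

lemma gamma_add:
  assumes "i \<noteq> h" "h \<noteq> j" "i \<noteq> j"
  shows "gamma i j = (\<lambda>t. gamma i h t + gamma h j t)"
  using assms unfolding gamma_def by (auto simp: fun_eq_iff)

text \<open>The factor \<open>-1\<close> is the shape in which \<open>sgn\<close> of a negative ratio difference occurs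
  in the generators of \<open>Qcone\<close>.\<close>

lemma gamma_swap: "i \<noteq> j \<Longrightarrow> (\<lambda>t. - 1 * gamma j i t) = gamma i j"
  unfolding gamma_def by (auto simp: fun_eq_iff)

lemma surj_levels_induct:
  fixes \<sigma> :: "nat \<Rightarrow> nat"
  assumes surj: "\<sigma> ` {1..n} = {1..K}"
    and step: "\<And>i j. i \<in> {1..n} \<Longrightarrow> j \<in> {1..n} \<Longrightarrow> \<sigma> j = \<sigma> i + 1 \<Longrightarrow> R i j"
    and trans: "\<And>i h j. i \<in> {1..n} \<Longrightarrow> h \<in> {1..n} \<Longrightarrow> j \<in> {1..n} \<Longrightarrow>
                  \<sigma> i < \<sigma> h \<Longrightarrow> \<sigma> h < \<sigma> j \<Longrightarrow> R i h \<Longrightarrow> R h j \<Longrightarrow> R i j"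
    and ij: "i \<in> {1..n}" "j \<in> {1..n}" "\<sigma> i < \<sigma> j"
  shows "R i j"
proof -
  have "j \<in> {1..n} \<Longrightarrow> \<sigma> j = \<sigma> i + Suc d \<Longrightarrow> R i j" for d j
  proof (induction d arbitrary: j)
    case 0
    then show ?case using step ij(1) by simp
  next
    case (Suc d)
    have "\<sigma> i \<in> {1..K}" "\<sigma> j \<in> {1..K}"
      using surj ij(1) Suc.prems(1) by blast+
    then have "\<sigma> i + Suc d \<in> {1..K}" using Suc.prems(2) by auto
    then obtain h where h: "h \<in> {1..n}" "\<sigma> h = \<sigma> i + Suc d"
      using surj by (metis imageE)
    show ?case
    proof (rule trans[OF ij(1) h(1) Suc.prems(1)])
      show "\<sigma> i < \<sigma> h" "\<sigma> h < \<sigma> j" using h Suc.prems(2) by simp_all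
      show "R i h" using Suc.IH[OF h] .
      show "R h j" using step[OF h(1) Suc.prems(1)] h(2) Suc.prems(2) by simp
    qed
  qed
  moreover obtain d where "\<sigma> j = \<sigma> i + Suc d" using less_imp_Suc_add[OF ij(3)] by auto
  ultimately show ?thesis using ij(2) by blast
qed

lemma gamma_in_Qsigma:
  assumes surj: "\<sigma> ` {1..n} = {1..K}" and ij: "i \<in> {1..n}" "j \<in> {1..n}" "\<sigma> i < \<sigma> j"
  shows "gamma i j \<in> Qsigma n \<sigma>"
proof (rule surj_levels_induct[OF surj _ _ ij])
  show "gamma i j \<in> Qsigma n \<sigma>" if "i \<in> {1..n}" "j \<in> {1..n}" "\<sigma> j = \<sigma> i + 1" for i j
    unfolding Qsigma_def using that by (blast intro: fcone_generator[OF finite_Qsigma_generators])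
  show "gamma i j \<in> Qsigma n \<sigma>"
    if "\<sigma> i < \<sigma> h" "\<sigma> h < \<sigma> j" "gamma i h \<in> Qsigma n \<sigma>" "gamma h j \<in> Qsigma n \<sigma>" for i h j
  proof -
    have "gamma i j = (\<lambda>t. gamma i h t + gamma h j t)"
      using that(1,2) by (intro gamma_add) auto
    then show ?thesis using that(3,4) fcone_add[of "gamma i h" _ "gamma h j"] unfolding Qsigma_def by simp
  qed
qed

context
  fixes n :: nat and Ps P :: "nat \<Rightarrow> real" and \<sigma> :: "nat \<Rightarrow> nat"
  assumes cell: "P \<in> Cset n Ps \<sigma>"
begin

lemma Cset_ratio_eq:
  "i \<in> {1..n} \<Longrightarrow> j \<in> {1..n} \<Longrightarrow> \<sigma> i = \<sigma> j \<Longrightarrow> P i / Ps i = P j / Ps j"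
  using cell unfolding Cset_def by blast

lemma Cset_ratio_gt_step:
  "i \<in> {1..n} \<Longrightarrow> j \<in> {1..n} \<Longrightarrow> \<sigma> j = \<sigma> i + 1 \<Longrightarrow> P i / Ps i > P j / Ps j"
  using cell unfolding Cset_def by blast

lemma Cset_ratio_gt:
  assumes "\<sigma> ` {1..n} = {1..K}" "i \<in> {1..n}" "j \<in> {1..n}" "\<sigma> i < \<sigma> j"
  shows "P i / Ps i > P j / Ps j"
  by (rule surj_levels_induct[where R = "\<lambda>i j. P i / Ps i > P j / Ps j", OF assms(1) _ _ assms(2-4)])
     (auto intro: Cset_ratio_gt_step)

lemma Qsigma_subset_Qcone: "Qsigma n \<sigma> \<subseteq> Qcone n P Ps"
  unfolding Qsigma_def Qcone_def
proof (rule fcone_mono[OF finite_Qcone_generators], rule subsetI)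
  fix x assume "x \<in> {gamma i j | i j. i \<in> {1..n} \<and> j \<in> {1..n} \<and> \<sigma> j = \<sigma> i + 1}"
  then obtain i j where x: "x = gamma i j" and ij: "i \<in> {1..n}" "j \<in> {1..n}" "\<sigma> j = \<sigma> i + 1"
    by blast
  have gt: "P i / Ps i > P j / Ps j" using Cset_ratio_gt_step ij by blast
  then consider "i < j" | "j < i" by fastforce
  then show "x \<in> {(\<lambda>t. sgn (P j / Ps j - P i / Ps i) * gamma j i t) | j i. 1 \<le> j \<and> j < i \<and> i \<le> n}"
  proof cases
    case 1
    then show ?thesis using x gt ij by (intro CollectI exI[of _ i] exI[of _ j]) auto
  next
    case 2
    then show ?thesis using x gt ij gamma_swap[of i j] by (intro CollectI exI[of _ j] exI[of _ i]) auto
  qed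
qed

lemma Qcone_subset_Qsigma:
  assumes surj: "\<sigma> ` {1..n} = {1..K}"
  shows "Qcone n P Ps \<subseteq> Qsigma n \<sigma>"
proof -
  have "{(\<lambda>t. sgn (P j / Ps j - P i / Ps i) * gamma j i t) | j i. 1 \<le> j \<and> j < i \<and> i \<le> n}
          \<subseteq> Qsigma n \<sigma>"
  proof (rule subsetI)
    fix x assume "x \<in> {(\<lambda>t. sgn (P j / Ps j - P i / Ps i) * gamma j i t) | j i. 1 \<le> j \<and> j < i \<and> i \<le> n}"
    then obtain j i where x: "x = (\<lambda>t. sgn (P j / Ps j - P i / Ps i) * gamma j i t)"
      and ji: "j \<in> {1..n}" "i \<in> {1..n}" "j < i" by auto
    consider "\<sigma> j = \<sigma> i" | "\<sigma> j < \<sigma> i" | "\<sigma> i < \<sigma> j" by linarith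
    then show "x \<in> Qsigma n \<sigma>"
    proof cases
      case 1
      then show ?thesis using x Cset_ratio_eq[OF ji(1,2)] fcone_zero unfolding Qsigma_def by simp
    next
      case 2
      then show ?thesis using x gamma_in_Qsigma[OF surj ji(1,2)] Cset_ratio_gt[OF surj ji(1,2)] by simp
    next
      case 3
      then have "x = gamma i j"
        using x Cset_ratio_gt[OF surj ji(2,1)] gamma_swap[of i j] ji(3) by simp
      then show ?thesis using gamma_in_Qsigma[OF surj ji(2,1) 3] by simp
    qed
  qed
  then show ?thesis unfolding Qcone_def Qsigma_def by (rule fcone_least[OF finite_Qcone_generators])
qed

lemma Qcone_eq_Qsigma: "\<sigma> ` {1..n} = {1..K} \<Longrightarrow> Qcone n P Ps = Qsigma n \<sigma>"
  using Qcone_subset_Qsigma Qsigma_subset_Qcone by blast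

end

section \<open>Every point of the simplex lies in a cell\<close>

definition rank_desc :: "'a::linorder set \<Rightarrow> 'a \<Rightarrow> nat" where
  "rank_desc V v = card {w \<in> V. v < w}"

lemma rank_desc_antimono: "finite V \<Longrightarrow> v \<le> v' \<Longrightarrow> rank_desc V v' \<le> rank_desc V v"
  unfolding rank_desc_def by (intro card_mono) auto

lemma rank_desc_strict_antimono:
  "finite V \<Longrightarrow> v \<in> V \<Longrightarrow> v' \<in> V \<Longrightarrow> v < v' \<Longrightarrow> rank_desc V v' < rank_desc V v"
  unfolding rank_desc_def by (intro psubset_card_mono) auto

lemma inj_on_rank_desc: "finite V \<Longrightarrow> inj_on (rank_desc V) V"
  by (intro inj_onI) (metis linorder_cases less_irrefl rank_desc_strict_antimono)

lemma rank_desc_image: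
  assumes "finite V"
  shows "rank_desc V ` V = {0..<card V}"
proof (rule card_subset_eq)
  have "rank_desc V v < card V" if "v \<in> V" for v
    unfolding rank_desc_def using assms that by (intro psubset_card_mono) auto
  then show "rank_desc V ` V \<subseteq> {0..<card V}" by auto
qed (use assms inj_on_rank_desc card_image in auto)

lemma simplex_in_some_Cset:
  assumes P: "P \<in> simplex n" and n: "n \<ge> 1"
  shows "\<exists>\<sigma> k'. k' \<le> n - 1 \<and> \<sigma> ` {1..n} = {1..k'+1} \<and> P \<in> Cset n Ps \<sigma>"
proof -
  define r where "r i = P i / Ps i" for i
  define V where "V = r ` {1..n}"
  define \<sigma> where "\<sigma> i = Suc (rank_desc V (r i))" for i
  have fin: "finite V" and card: "1 \<le> card V" "card V \<le> n"
    using n card_image_le[of "{1..n}" r] unfolding V_def by (auto simp: Suc_le_eq card_gt_0_iff)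
  have "\<sigma> ` {1..n} = Suc ` rank_desc V ` V"
    unfolding \<sigma>_def V_def by (auto simp: image_image)
  also have "\<dots> = {1..(card V - 1) + 1}"
    using card by (simp add: rank_desc_image[OF fin] image_Suc_atLeastLessThan atLeastLessThanSuc_atLeastAtMost)
  finally have surj: "\<sigma> ` {1..n} = {1..(card V - 1) + 1}" .
  have "P \<in> Cset n Ps \<sigma>"
    unfolding Cset_def
  proof (intro CollectI conjI ballI impI P)
    fix i j assume "i \<in> {1..n}" "j \<in> {1..n}" "\<sigma> i = \<sigma> j"
    then show "P i / Ps i = P j / Ps j"
      using inj_on_rank_desc[OF fin] unfolding \<sigma>_def V_def r_def by (auto dest: inj_onD)
  next
    fix i j assume "\<sigma> j = \<sigma> i + 1"
    then show "P i / Ps i > P j / Ps j"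
      using rank_desc_antimono[OF fin, of "r i" "r j"] unfolding \<sigma>_def r_def by fastforce
  qed
  then show ?thesis using surj card by (intro exI[of _ \<sigma>] exI[of _ "card V - 1"]) simp
qed

section \<open>Local uniqueness on the condition manifold\<close>

lemma Lman_add_L0:
  assumes "P \<in> Lman n k m M" "q \<in> L0 n k m"
  shows "(\<lambda>t. P t + q t) \<in> Lman n k m M"
  using assms unfolding Lman_def L0_def vecn_def by (simp add: distrib_left sum.distrib)

lemma Lman_diff_in_L0:
  assumes "P \<in> Lman n k m M" "(\<lambda>t. P t + q t) \<in> Lman n k m M"
  shows "q \<in> L0 n k m"
proof -
  have "(\<Sum>j=1..n. m r j * q j) = 0" if "r \<le> k" for r
    using assms that unfolding Lman_def by (auto simp: distrib_left sum.distrib)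
  moreover have "q \<in> vecn n" using assms unfolding Lman_def vecn_def by auto
  ultimately show ?thesis unfolding L0_def by simp
qed

lemma translate_inter_Lman_eq_singleton_iff:
  assumes "P \<in> Lman n k m M" "(\<lambda>_. 0) \<in> C"
  shows "translate P C \<inter> Lman n k m M = {P} \<longleftrightarrow> L0 n k m \<inter> C = {(\<lambda>_. 0)}"
proof
  assume unique: "translate P C \<inter> Lman n k m M = {P}"
  have "q = (\<lambda>_. 0)" if "q \<in> L0 n k m" "q \<in> C" for q
  proof -
    have "(\<lambda>t. P t + q t) \<in> translate P C \<inter> Lman n k m M"
      using that assms(1) Lman_add_L0 unfolding translate_def by blast
    then show ?thesis using unique by (auto simp: fun_eq_iff)
  qed
  moreover have "(\<lambda>_. 0) \<in> L0 n k m" unfolding L0_def vecn_def by simp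
  ultimately show "L0 n k m \<inter> C = {(\<lambda>_. 0)}" using assms(2) by blast
next
  assume trivial: "L0 n k m \<inter> C = {(\<lambda>_. 0)}"
  have "P \<in> translate P C" using assms(2) unfolding translate_def by force
  moreover have "x = P" if x: "x \<in> translate P C" "x \<in> Lman n k m M" for x
  proof -
    obtain q where q: "x = (\<lambda>t. P t + q t)" "q \<in> C" using x(1) unfolding translate_def by blast
    then have "q \<in> L0 n k m" using Lman_diff_in_L0 assms(1) x(2) by blast
    then have "q = (\<lambda>_. 0)" using q(2) trivial by blast
    then show ?thesis using q(1) by simp
  qed
  ultimately show "translate P C \<inter> Lman n k m M = {P}" using assms(1) by blast
qed

lemma translate_Qcone_inter_Lman_eq_singleton_iff:
  assumes "P \<in> Lman n k m M" "P \<in> Cset n Ps \<sigma>" "\<sigma> ` {1..n} = {1..K}"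
  shows "translate P (Qcone n P Ps) \<inter> Lman n k m M = {P} \<longleftrightarrow> L0 n k m \<inter> Qsigma n \<sigma> = {(\<lambda>_. 0)}"
proof -
  have "(\<lambda>_. 0) \<in> Qsigma n \<sigma>" unfolding Qsigma_def by (rule fcone_zero)
  then show ?thesis
    using translate_inter_Lman_eq_singleton_iff[OF assms(1)] Qcone_eq_Qsigma[OF assms(2,3)] by simp
qed

lemma simplex_pos_subset_simplex: "simplex_pos n \<subseteq> simplex n"
  unfolding simplex_pos_def simplex_def by (auto simp: less_imp_le)

lemma locally_unique_points_eq_Union_cells:
  assumes "n \<ge> 1"
  shows "{P0 \<in> Lman n k m M \<inter> simplex_pos n. translate P0 (Qcone n P0 Ps) \<inter> Lman n k m M = {P0}}
         = \<Union>{Lman n k m M \<inter> Cset n Ps \<sigma> \<inter> simplex_pos n | \<sigma> k'.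
               k' \<le> n - 1 \<and> \<sigma> ` {1..n} = {1..k'+1} \<and>
               Lman n k m M \<inter> Cset n Ps \<sigma> \<noteq> {} \<and>
               L0 n k m \<inter> Qsigma n \<sigma> = {(\<lambda>_. 0)}}" (is "?A = \<Union>?B")
proof (intro equalityI subsetI)
  fix P assume P: "P \<in> ?A"
  then have "P \<in> simplex n" using simplex_pos_subset_simplex by blast
  then obtain \<sigma> k' where \<sigma>: "k' \<le> n - 1" "\<sigma> ` {1..n} = {1..k'+1}" "P \<in> Cset n Ps \<sigma>"
    using simplex_in_some_Cset[OF _ assms] by blast
  have "L0 n k m \<inter> Qsigma n \<sigma> = {(\<lambda>_. 0)}"
    using P translate_Qcone_inter_Lman_eq_singleton_iff[OF _ \<sigma>(3,2)] by blast
  with P \<sigma> show "P \<in> \<Union>?B" by blast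
next
  fix P assume "P \<in> \<Union>?B"
  then obtain \<sigma> k' where "\<sigma> ` {1..n} = {1..k'+1}" "L0 n k m \<inter> Qsigma n \<sigma> = {(\<lambda>_. 0)}"
      and P: "P \<in> Lman n k m M" "P \<in> Cset n Ps \<sigma>" "P \<in> simplex_pos n"
    by blast
  then show "P \<in> ?A" using translate_Qcone_inter_Lman_eq_singleton_iff[OF P(1,2)] by blast
qed

theorem mainTheorem10:
  fixes n k :: nat and Ps M :: "nat \<Rightarrow> real" and m :: "nat \<Rightarrow> nat \<Rightarrow> real"
  assumes "n \<ge> 2"
    and "Ps \<in> vecn n" and "\<forall>i\<in>{1..n}. Ps i > 0" and "(\<Sum>i=1..n. Ps i) = 1"
    and "\<forall>j\<in>{1..n}. m 0 j = 1" and "M 0 = 1"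
    and "Lman n k m M \<inter> simplex_pos n \<noteq> {}"
  shows "{P0 \<in> Lman n k m M \<inter> simplex_pos n.
            translate P0 (Qcone n P0 Ps) \<inter> Lman n k m M = {P0}}
         = \<Union>{Lman n k m M \<inter> Cset n Ps \<sigma> \<inter> simplex_pos n | \<sigma> k'.
               k' \<le> n - 1 \<and> \<sigma> ` {1..n} = {1..k'+1} \<and>
               Lman n k m M \<inter> Cset n Ps \<sigma> \<noteq> {} \<and>
               L0 n k m \<inter> Qsigma n \<sigma> = {(\<lambda>_. 0)}}
       \<and> (\<forall>\<sigma> k'. k' \<le> n - 1 \<and> \<sigma> ` {1..n} = {1..k'+1} \<longrightarrow>
              (\<forall>P\<in>Cset n Ps \<sigma>. Qcone n P Ps = Qsigma n \<sigma>))"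
proof (rule conjI)
  show "(\<forall>\<sigma> k'. k' \<le> n - 1 \<and> \<sigma> ` {1..n} = {1..k'+1} \<longrightarrow>
          (\<forall>P\<in>Cset n Ps \<sigma>. Qcone n P Ps = Qsigma n \<sigma>))"
    by (intro allI impI ballI Qcone_eq_Qsigma) auto
qed (rule locally_unique_points_eq_Union_cells, use assms(1) in simp)

end
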